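(* Let $D=(V,A)$ be a strongly connected oriented graph. The following two conditions are equivalent: (1) for every vertex $x$, the out-neighbourhood $x^+$ induces a tournament and the in-neighbourhood $x^-$ induces an acyclic digraph; (2) there exists a cyclic order of $V$ such that for every arc $xy\in A$ and every vertex $z\in\,]x,y[$, we have $zy\in A$.
   Context: All digraphs are finite, with no loops and no parallel arcs. A digon is a pair of arcs $xy,yx$; an oriented graph is a digraph with no digon. For a vertex $x$, $x^+=\{y: xy\in A\}$ and $x^-=\{y: yx\in A\}$. A digraph is strongly connected (strong) if there is a directed path between every ordered pair of vertices. A tournament is an oriented graph in which any two distinct vertices are joined by an arc. A linear order $(v_1,\dots,v_n)$ of $V$ is equivalent to each of its cyclic shifts $(v_k,\dots,v_n,v_1,\dots,v_{k-1})$; an equivalence class is a cyclic order. For vertices $v_i,v_j$, the cyclic interval $[v_i,v_j]$ is $\{v_k: i\le k\le j\}$ if $i<j$ and $\{v_k: k\notin\,]j,i[\}$ if $i\ge j$ (this depends only on the cyclic order), and $]v_i,v_j[=[v_i,v_j]\setminus\{v_i,v_j\}$. *)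

theory Defs
  imports Main
begin

definition digraph :: "'a set \<Rightarrow> ('a \<times> 'a) set \<Rightarrow> bool" where
  "digraph V A \<longleftrightarrow> finite V \<and> A \<subseteq> V \<times> V \<and> (\<forall>x. (x, x) \<notin> A)"

definition oriented_graph :: "'a set \<Rightarrow> ('a \<times> 'a) set \<Rightarrow> bool" where
  "oriented_graph V A \<longleftrightarrow> digraph V A \<and> (\<forall>x y. (x, y) \<in> A \<longrightarrow> (y, x) \<notin> A)"

definition strongly_connected :: "'a set \<Rightarrow> ('a \<times> 'a) set \<Rightarrow> bool" where
  "strongly_connected V A \<longleftrightarrow> (\<forall>u\<in>V. \<forall>v\<in>V. (u, v) \<in> A\<^sup>*)"

definition out_nbhd :: "('a \<times> 'a) set \<Rightarrow> 'a \<Rightarrow> 'a set" where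
  "out_nbhd A x = {y. (x, y) \<in> A}"

definition in_nbhd :: "('a \<times> 'a) set \<Rightarrow> 'a \<Rightarrow> 'a set" where
  "in_nbhd A x = {y. (y, x) \<in> A}"

definition induced_arcs :: "('a \<times> 'a) set \<Rightarrow> 'a set \<Rightarrow> ('a \<times> 'a) set" where
  "induced_arcs A S = A \<inter> (S \<times> S)"

definition induces_tournament :: "('a \<times> 'a) set \<Rightarrow> 'a set \<Rightarrow> bool" where
  "induces_tournament A S \<longleftrightarrow>
     (\<forall>x\<in>S. \<forall>y\<in>S. (x, y) \<in> induced_arcs A S \<longrightarrow> (y, x) \<notin> induced_arcs A S) \<and>
     (\<forall>x\<in>S. \<forall>y\<in>S. x \<noteq> y \<longrightarrow> (x, y) \<in> induced_arcs A S \<or> (y, x) \<in> induced_arcs A S)"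

definition induces_acyclic :: "('a \<times> 'a) set \<Rightarrow> 'a set \<Rightarrow> bool" where
  "induces_acyclic A S \<longleftrightarrow> acyclic (induced_arcs A S)"

text \<open>A linear order of V is a distinct list enumerating V; the cyclic order is its
  class under cyclic shifts. This only depends on the cyclic order.\<close>
definition linear_order_of :: "'a set \<Rightarrow> 'a list \<Rightarrow> bool" where
  "linear_order_of V vs \<longleftrightarrow> distinct vs \<and> set vs = V"

definition open_cyc_interval :: "'a list \<Rightarrow> 'a \<Rightarrow> 'a \<Rightarrow> 'a set" where
  "open_cyc_interval vs x y =
     {vs ! k | k. \<exists>i j. i < length vs \<and> j < length vs \<and> vs ! i = x \<and> vs ! j = y \<and>
          k < length vs \<and> (if i < j then i < k \<and> k < j else k < j \<or> i < k)} - {x, y}"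

end

theory Submission
  imports Defs "HOL-Combinatorics.Orbits"
begin

text \<open>
  (2) implies (1): measure vertices by their cyclic distance from x. Of two out-neighbours of x the
  nearer one lies in the interval from x to the farther one and hence dominates it. An arc ab between
  in-neighbours of x must increase the distance from x, since otherwise x lies in ]a,b[ and dominates b,
  creating a digon; so the distance from x orders the in-neighbourhood and it is acyclic.

  (1) implies (2): call a cyclic permutation s of a vertex set S dominating if x \<rightarrow> s x and every other
  out-neighbour of x in S is also an out-neighbour of s x. Iterating along the cycle, every vertex
  strictly between x and y dominates y whenever xy is an arc, so a dominating cycle through all of V
  gives the cyclic order. A shortest directed cycle is chordless, hence dominating. A vertex y outside S
  receiving an arc from S is absorbed: following the cycle from an in-neighbour of y one must leave the
  in-neighbourhood of y (it is acyclic) at a vertex u with s u an out-neighbour of y; acyclicity of the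
  in-neighbourhood of s u makes u unique, and inserting y between u and s u keeps the cycle dominating.
  Strong connectivity lets this continue until S = V.
\<close>

section \<open>Positions and cyclic distances in a list\<close>

definition pos :: "'a list \<Rightarrow> 'a \<Rightarrow> nat" where
  "pos vs x = (THE i. i < length vs \<and> vs ! i = x)"

lemma pos_nth: "distinct vs \<Longrightarrow> i < length vs \<Longrightarrow> pos vs (vs ! i) = i"
  unfolding pos_def by (rule the_equality) (auto simp: nth_eq_iff_index_eq)

lemma pos_less_length: "distinct vs \<Longrightarrow> x \<in> set vs \<Longrightarrow> pos vs x < length vs"
  by (metis in_set_conv_nth pos_nth)

lemma nth_pos: "distinct vs \<Longrightarrow> x \<in> set vs \<Longrightarrow> vs ! pos vs x = x"
  by (metis in_set_conv_nth pos_nth)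

lemma pos_eq_iff: "distinct vs \<Longrightarrow> x \<in> set vs \<Longrightarrow> z \<in> set vs \<Longrightarrow> pos vs x = pos vs z \<longleftrightarrow> x = z"
  by (metis nth_pos)

definition cyc_dist :: "'a list \<Rightarrow> 'a \<Rightarrow> 'a \<Rightarrow> nat" where
  "cyc_dist vs x z =
     (if pos vs x \<le> pos vs z then pos vs z - pos vs x else length vs + pos vs z - pos vs x)"

lemma cyc_dist_self [simp]: "cyc_dist vs x x = 0"
  unfolding cyc_dist_def by simp

lemma cyc_dist_less_length:
  "distinct vs \<Longrightarrow> x \<in> set vs \<Longrightarrow> z \<in> set vs \<Longrightarrow> cyc_dist vs x z < length vs"
  using pos_less_length[of vs] unfolding cyc_dist_def by fastforce

lemma nth_cyc_dist:
  assumes "distinct vs" "x \<in> set vs" "z \<in> set vs"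
  shows "vs ! ((pos vs x + cyc_dist vs x z) mod length vs) = z"
proof -
  have "pos vs x < length vs" "pos vs z < length vs"
    using pos_less_length[OF assms(1) assms(2)] pos_less_length[OF assms(1) assms(3)] by simp_all
  then have "pos vs x + cyc_dist vs x z =
      (if pos vs x \<le> pos vs z then pos vs z else length vs + pos vs z)"
    unfolding cyc_dist_def by auto
  then have "(pos vs x + cyc_dist vs x z) mod length vs = pos vs z"
    using \<open>pos vs z < length vs\<close> by simp
  then show ?thesis using nth_pos assms by simp
qed

lemma cyc_dist_nth_mod:
  assumes "distinct vs" "x \<in> set vs" "m < length vs"
  shows "cyc_dist vs x (vs ! ((pos vs x + m) mod length vs)) = m"
proof -
  let ?i = "pos vs x" and ?n = "length vs"
  have "?i < ?n" using pos_less_length[OF assms(1,2)] .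
  have "(?i + m) mod ?n < ?n" using \<open>?i < ?n\<close> by (intro mod_less_divisor) linarith
  then have "pos vs (vs ! ((?i + m) mod ?n)) = (?i + m) mod ?n"
    by (rule pos_nth[OF assms(1)])
  moreover have "(if ?i \<le> (?i + m) mod ?n then (?i + m) mod ?n - ?i
      else ?n + (?i + m) mod ?n - ?i) = m"
  proof (cases "?i + m < ?n")
    case True
    then show ?thesis by simp
  next
    case False
    have wrap: "?n \<le> ?i + m" "?i + m - ?n < ?n" using False \<open>?i < ?n\<close> assms(3) by linarith+
    have "(?i + m) mod ?n = ?i + m - ?n"
      by (simp only: le_mod_geq[OF wrap(1)] mod_less[OF wrap(2)])
    moreover have "\<not> ?i \<le> ?i + m - ?n" "?n + (?i + m - ?n) - ?i = m"
      using False assms(3) by linarith+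
    ultimately show ?thesis by simp
  qed
  ultimately show ?thesis unfolding cyc_dist_def by (simp only:)
qed

lemma inj_on_cyc_dist: "distinct vs \<Longrightarrow> x \<in> set vs \<Longrightarrow> inj_on (cyc_dist vs x) (set vs)"
  by (rule inj_onI) (metis nth_cyc_dist)

lemma open_cyc_intervalI:
  assumes "i < length vs" "j < length vs" "k < length vs"
    and "if i < j then i < k \<and> k < j else k < j \<or> i < k" "vs ! k \<noteq> vs ! i" "vs ! k \<noteq> vs ! j"
  shows "vs ! k \<in> open_cyc_interval vs (vs ! i) (vs ! j)"
  unfolding open_cyc_interval_def using assms by blast

lemma open_cyc_interval_pos_iff:
  assumes vs: "distinct vs" and x: "x \<in> set vs" and y: "y \<in> set vs"
  shows "z \<in> open_cyc_interval vs x y \<longleftrightarrow> z \<in> set vs \<and> z \<noteq> x \<and> z \<noteq> y \<and>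
    (if pos vs x < pos vs y then pos vs x < pos vs z \<and> pos vs z < pos vs y
     else pos vs z < pos vs y \<or> pos vs x < pos vs z)"
proof
  assume "z \<in> open_cyc_interval vs x y"
  then obtain k i j where "z = vs ! k" "i < length vs" "j < length vs" "vs ! i = x" "vs ! j = y"
      "k < length vs" "if i < j then i < k \<and> k < j else k < j \<or> i < k" "z \<noteq> x" "z \<noteq> y"
    unfolding open_cyc_interval_def by blast
  then show "z \<in> set vs \<and> z \<noteq> x \<and> z \<noteq> y \<and>
    (if pos vs x < pos vs y then pos vs x < pos vs z \<and> pos vs z < pos vs y
     else pos vs z < pos vs y \<or> pos vs x < pos vs z)"
    using pos_nth[OF vs] by auto
next
  assume z: "z \<in> set vs \<and> z \<noteq> x \<and> z \<noteq> y \<and>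
    (if pos vs x < pos vs y then pos vs x < pos vs z \<and> pos vs z < pos vs y
     else pos vs z < pos vs y \<or> pos vs x < pos vs z)"
  then have "vs ! pos vs z \<in> open_cyc_interval vs (vs ! pos vs x) (vs ! pos vs y)"
    using pos_less_length[OF vs] nth_pos[OF vs] x y by (intro open_cyc_intervalI) auto
  then show "z \<in> open_cyc_interval vs x y"
    using nth_pos[OF vs] x y z by simp
qed

lemma open_cyc_interval_iff:
  assumes vs: "distinct vs" and x: "x \<in> set vs" and y: "y \<in> set vs" and "x \<noteq> y"
  shows "z \<in> open_cyc_interval vs x y \<longleftrightarrow>
    z \<in> set vs \<and> 0 < cyc_dist vs x z \<and> cyc_dist vs x z < cyc_dist vs x y"
  unfolding open_cyc_interval_pos_iff[OF assms(1-3)] cyc_dist_def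
  using pos_eq_iff[OF vs] pos_less_length[OF vs x] pos_less_length[OF vs y]
    pos_less_length[OF vs, of z] x y \<open>x \<noteq> y\<close> by auto

lemma open_cyc_interval_rotate:
  assumes vs: "distinct vs" and "a \<in> set vs" "b \<in> set vs" "x \<in> set vs"
    and "0 < cyc_dist vs x b" "cyc_dist vs x b < cyc_dist vs x a"
  shows "x \<in> open_cyc_interval vs a b"
  using assms pos_eq_iff[OF vs] pos_less_length[OF vs assms(2)]
  unfolding open_cyc_interval_pos_iff[OF assms(1-3)] cyc_dist_def by (auto split: if_splits)

section \<open>Interval-dominating cyclic orders\<close>

definition interval_dominating :: "('a \<times> 'a) set \<Rightarrow> 'a list \<Rightarrow> bool" where
  "interval_dominating A vs \<longleftrightarrow>
     (\<forall>x y z. (x, y) \<in> A \<longrightarrow> z \<in> open_cyc_interval vs x y \<longrightarrow> (z, y) \<in> A)"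

lemma interval_dominating_out_nbhd_tournament:
  assumes og: "oriented_graph V A" and vs: "linear_order_of V vs" and dom: "interval_dominating A vs"
  shows "induces_tournament A (out_nbhd A x)"
  unfolding induces_tournament_def induced_arcs_def
proof (intro conjI ballI impI)
  fix a b assume "a \<in> out_nbhd A x" "b \<in> out_nbhd A x" "(a, b) \<in> A \<inter> out_nbhd A x \<times> out_nbhd A x"
  then show "(b, a) \<notin> A \<inter> out_nbhd A x \<times> out_nbhd A x"
    using og unfolding oriented_graph_def by blast
next
  fix a b assume a: "a \<in> out_nbhd A x" and b: "b \<in> out_nbhd A x" and "a \<noteq> b"
  have xa: "(x, a) \<in> A" and xb: "(x, b) \<in> A" using a b unfolding out_nbhd_def by auto
  have dist: "distinct vs" and set: "x \<in> set vs" "a \<in> set vs" "b \<in> set vs" "x \<noteq> a" "x \<noteq> b"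
    using og vs xa xb unfolding oriented_graph_def digraph_def linear_order_of_def by auto
  have "cyc_dist vs x a \<noteq> cyc_dist vs x b" "0 < cyc_dist vs x a" "0 < cyc_dist vs x b"
    using inj_on_cyc_dist[OF dist set(1)] set \<open>a \<noteq> b\<close>
    by (metis cyc_dist_self inj_on_contraD gr0I)+
  then have "a \<in> open_cyc_interval vs x b \<or> b \<in> open_cyc_interval vs x a"
    using open_cyc_interval_iff[OF dist set(1)] set by (meson linorder_neqE_nat)
  then have "(a, b) \<in> A \<or> (b, a) \<in> A"
    using dom xa xb unfolding interval_dominating_def by blast
  then show "(a, b) \<in> A \<inter> out_nbhd A x \<times> out_nbhd A x \<or> (b, a) \<in> A \<inter> out_nbhd A x \<times> out_nbhd A x"
    using a b by auto
qed

lemma interval_dominating_in_nbhd_acyclic: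
  assumes og: "oriented_graph V A" and vs: "linear_order_of V vs" and dom: "interval_dominating A vs"
    and "x \<in> V"
  shows "induces_acyclic A (in_nbhd A x)"
proof -
  have dist: "distinct vs" and x: "x \<in> set vs" using vs \<open>x \<in> V\<close> unfolding linear_order_of_def by auto
  have "induced_arcs A (in_nbhd A x) \<subseteq> inv_image less_than (cyc_dist vs x)"
  proof
    fix p assume "p \<in> induced_arcs A (in_nbhd A x)"
    then obtain a b where p: "p = (a, b)" "(a, b) \<in> A" "(a, x) \<in> A" "(b, x) \<in> A"
      unfolding induced_arcs_def in_nbhd_def by auto
    have set: "a \<in> set vs" "b \<in> set vs" "a \<noteq> x" "b \<noteq> x" "a \<noteq> b"
      using og vs p unfolding oriented_graph_def digraph_def linear_order_of_def by auto
    have "\<not> cyc_dist vs x b < cyc_dist vs x a"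
    proof
      assume "cyc_dist vs x b < cyc_dist vs x a"
      moreover have "0 < cyc_dist vs x b"
        using inj_on_cyc_dist[OF dist x] set x by (metis cyc_dist_self inj_on_contraD gr0I)
      ultimately have "x \<in> open_cyc_interval vs a b"
        using open_cyc_interval_rotate[OF dist set(1,2) x] by blast
      then have "(x, b) \<in> A" using dom p unfolding interval_dominating_def by blast
      then show False using og p unfolding oriented_graph_def by blast
    qed
    moreover have "cyc_dist vs x a \<noteq> cyc_dist vs x b"
      using inj_on_cyc_dist[OF dist x] set by (meson inj_on_contraD)
    ultimately show "p \<in> inv_image less_than (cyc_dist vs x)" using p by auto
  qed
  then show ?thesis
    unfolding induces_acyclic_def using acyclic_subset wf_acyclic by blast
qed

lemma cyclic_on_eq_orbit: "cyclic_on s S \<Longrightarrow> a \<in> S \<Longrightarrow> S = orbit s a"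
  by (simp add: cyclic_on_alldef)

lemma cyclic_on_funpow_reaches:
  assumes "cyclic_on s S" "a \<in> S" "b \<in> S"
  obtains k where "(s ^^ k) a = b"
proof -
  have "b \<in> orbit s a" using cyclic_on_eq_orbit[OF assms(1,2)] assms(3) by simp
  then show thesis using that unfolding orbit_altdef by auto
qed

lemma cyclic_on_pred:
  assumes "cyclic_on s S" "b \<in> S"
  obtains p where "p \<in> S" "s p = b"
proof -
  have "b \<in> orbit s b" using cyclic_on_eq_orbit[OF assms] assms(2) by simp
  then obtain n where "0 < n" "(s ^^ n) b = b" unfolding orbit_altdef by auto
  then have "s ((s ^^ (n - 1)) b) = b" by (cases n) (simp_all add: funpow_swap1)
  then show thesis by (rule that[OF cyclic_on_funpow_in[OF assms]])
qed

lemma cyclic_on_inj_on: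
  assumes "cyclic_on s S"
  shows "inj_on s S"
proof (rule eq_card_imp_inj_on)
  show "finite S" using finite_cyclic_on[OF assms] .
  have "S \<subseteq> s ` S"
  proof
    fix b assume "b \<in> S"
    then obtain p where "p \<in> S" "s p = b" using cyclic_on_pred[OF assms] by blast
    then show "b \<in> s ` S" by blast
  qed
  then have "s ` S = S" using cyclic_on_inI[OF assms] by blast
  then show "card (s ` S) = card S" by simp
qed

definition succ_arcs :: "('a \<Rightarrow> 'a) \<Rightarrow> 'a set \<Rightarrow> ('a \<times> 'a) set" where
  "succ_arcs s X = {(p, s p) | p. p \<in> X \<and> s p \<in> X}"

lemma funpow_path_within:
  assumes "a \<in> X" "(s ^^ k) a = t" and closed: "\<And>z. z \<in> X \<Longrightarrow> z \<noteq> t \<Longrightarrow> s z \<in> X"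
  shows "t \<in> X \<and> (a, t) \<in> (succ_arcs s X)\<^sup>*"
  using assms(1,2)
proof (induction k arbitrary: a)
  case 0
  then show ?case by simp
next
  case (Suc k)
  show ?case
  proof (cases "a = t")
    case True
    then show ?thesis using Suc.prems(1) by simp
  next
    case False
    then have "s a \<in> X" using closed Suc.prems(1) by simp
    moreover have "(s ^^ k) (s a) = t" using Suc.prems(2) by (simp add: funpow_swap1)
    ultimately have IH: "t \<in> X \<and> (s a, t) \<in> (succ_arcs s X)\<^sup>*" by (rule Suc.IH)
    have "(a, s a) \<in> succ_arcs s X"
      using Suc.prems(1) \<open>s a \<in> X\<close> unfolding succ_arcs_def by simp
    then show ?thesis using IH converse_rtrancl_into_rtrancl[of a "s a"] by simp
  qed
qed

lemma cyclic_on_path_within: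
  assumes "cyclic_on s S" "X \<subseteq> S" "a \<in> X" "t \<in> S"
    and "\<And>z. z \<in> X \<Longrightarrow> z \<noteq> t \<Longrightarrow> s z \<in> X"
  shows "t \<in> X \<and> (a, t) \<in> (succ_arcs s X)\<^sup>*"
proof -
  have "a \<in> S" using assms(2,3) by (rule subsetD)
  then obtain k where "(s ^^ k) a = t" by (rule cyclic_on_funpow_reaches[OF assms(1) _ assms(4)])
  then show ?thesis by (rule funpow_path_within[OF assms(3) _ assms(5)])
qed

lemma orbit_subset_invariant:
  assumes "y \<in> X" "\<And>z. z \<in> X \<Longrightarrow> t z \<in> X"
  shows "orbit t y \<subseteq> X"
proof
  fix z assume "z \<in> orbit t y"
  then show "z \<in> X" by induction (use assms in auto)
qed

lemma cyclic_on_insert_after: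
  assumes cyc: "cyclic_on s S" and "u \<in> S" "y \<notin> S"
  shows "cyclic_on (s(u := y, y := s u)) (insert y S)"
proof -
  define t where "t = s(u := y, y := s u)"
  have "u \<noteq> y" using assms by auto
  then have t: "t u = y" "t y = s u" "\<And>z. z \<noteq> u \<Longrightarrow> z \<noteq> y \<Longrightarrow> t z = s z"
    unfolding t_def by auto
  have closed: "s z \<in> orbit t y" if "z \<in> S" "z \<in> orbit t y" for z
  proof (cases "z = u")
    case True
    then have "y \<in> orbit t y" using orbit.step[OF that(2)] t(1) by simp
    then show ?thesis using orbit.step[of y t y] True t(2) by simp
  next
    case False
    have "z \<noteq> y" using that(1) \<open>y \<notin> S\<close> by auto
    then show ?thesis using orbit.step[OF that(2)] False t(3) by simp
  qed
  have "(s ^^ n) (s u) \<in> orbit t y" for n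
  proof (induction n)
    case 0
    show ?case using orbit.base[of t y] t(2) by simp
  next
    case (Suc n)
    have "(s ^^ n) (s u) \<in> S" using cyclic_on_funpow_in[OF cyc cyclic_on_inI[OF cyc \<open>u \<in> S\<close>]] .
    then show ?case using closed Suc.IH by simp
  qed
  then have S: "S \<subseteq> orbit t y"
    using cyclic_on_eq_orbit[OF cyc cyclic_on_inI[OF cyc \<open>u \<in> S\<close>]] unfolding orbit_altdef by auto
  then have "y \<in> orbit t y" using orbit.step[of u t y] \<open>u \<in> S\<close> t(1) by auto
  moreover have "orbit t y \<subseteq> insert y S"
  proof (rule orbit_subset_invariant)
    show "t z \<in> insert y S" if "z \<in> insert y S" for z
    proof (cases "z = u \<or> z = y")
      case True
      then show ?thesis using t(1,2) cyclic_on_inI[OF cyc \<open>u \<in> S\<close>] by auto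
    next
      case False
      then show ?thesis using t(3) that cyclic_on_inI[OF cyc] by auto
    qed
  qed simp
  ultimately have "insert y S = orbit t y" using S by auto
  then show ?thesis unfolding t_def[symmetric] by (rule cyclic_on_singleI[rotated]) simp
qed

lemma cyclic_on_enumeration:
  assumes cyc: "cyclic_on s V"
  obtains vs where "distinct vs" "set vs = V"
    "\<And>x m. x \<in> V \<Longrightarrow> (s ^^ m) x = vs ! ((pos vs x + m) mod length vs)"
proof -
  obtain v where "v \<in> V" using cyc unfolding cyclic_on_def by blast
  have orbit: "V = orbit s v" by (rule cyclic_on_eq_orbit[OF cyc \<open>v \<in> V\<close>])
  then have v: "v \<in> orbit s v" using \<open>v \<in> V\<close> by simp
  define n where "n = funpow_dist1 s v v"
  define vs where "vs = map (\<lambda>i. (s ^^ i) v) [0..<n]"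
  have len: "length vs = n" and "0 < n" unfolding vs_def n_def by simp_all
  have "inj_on (\<lambda>i. (s ^^ i) v) {0..<n}" unfolding n_def by (rule inj_on_funpow_dist1[OF v])
  then have dist: "distinct vs" unfolding vs_def distinct_map set_upt by simp
  have set: "set vs = V"
    unfolding vs_def orbit orbit_conv_funpow_dist1[OF v] n_def[symmetric] by (simp only: set_map set_upt)
  have iter: "(s ^^ m) v = vs ! (m mod n)" for m
  proof -
    have "(s ^^ m) v = (s ^^ (m mod n)) v"
      using funpow_mod_eq[where f = s and n = n and x = v and m = m] funpow_dist1_prop[OF v]
      unfolding n_def by simp
    then show ?thesis unfolding vs_def using \<open>0 < n\<close> by simp
  qed
  show thesis
  proof (rule that[OF dist set])
    fix x m assume "x \<in> V"
    then have "pos vs x < n" "vs ! pos vs x = x"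
      using pos_less_length[OF dist] nth_pos[OF dist] set len by auto
    then have "x = (s ^^ pos vs x) v" using iter[of "pos vs x"] by simp
    then have "(s ^^ m) x = (s ^^ (pos vs x + m)) v" by (simp add: funpow_add add.commute)
    then show "(s ^^ m) x = vs ! ((pos vs x + m) mod length vs)" using iter len by simp
  qed
qed

section \<open>Shortest closed walks\<close>

definition closed_walk :: "('a \<times> 'a) set \<Rightarrow> nat \<Rightarrow> (nat \<Rightarrow> 'a) \<Rightarrow> bool" where
  "closed_walk A k c \<longleftrightarrow> 0 < k \<and> (\<forall>i<k. (c i, c (Suc i mod k)) \<in> A)"

lemma closed_walk_if_trancl:
  assumes "(a, a) \<in> A\<^sup>+"
  obtains k c where "closed_walk A k c"
proof -
  obtain k where "0 < k" "(a, a) \<in> A ^^ k" using assms trancl_power by blast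
  then obtain c where c: "c 0 = a" "c k = a" "\<forall>i<k. (c i, c (Suc i)) \<in> A"
    using relpow_fun_conv by metis
  have "(c i, c (Suc i mod k)) \<in> A" if "i < k" for i
    using c that by (cases "Suc i = k") auto
  then show thesis using \<open>0 < k\<close> that unfolding closed_walk_def by blast
qed

lemma closed_walk_rotate:
  assumes "closed_walk A k c"
  shows "closed_walk A k (\<lambda>m. c ((i + m) mod k))"
  unfolding closed_walk_def
proof (intro conjI allI impI)
  show "0 < k" using assms unfolding closed_walk_def by simp
  fix m
  have "(c ((i + m) mod k), c (Suc ((i + m) mod k) mod k)) \<in> A"
    using assms \<open>0 < k\<close> unfolding closed_walk_def by simp
  then show "(c ((i + m) mod k), c ((i + Suc m mod k) mod k)) \<in> A"
    by (simp add: mod_Suc_eq mod_add_right_eq)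
qed

lemma closed_walk_shortcut:
  assumes walk: "closed_walk A k c" and "1 < j" "j < k" and chord: "(c 0, c j) \<in> A"
  shows "closed_walk A (k + 1 - j) (\<lambda>m. if m = 0 then c 0 else c (m + j - 1))"
  unfolding closed_walk_def
proof (intro conjI allI impI)
  let ?k = "k + 1 - j" and ?c = "\<lambda>m. if m = 0 then c 0 else c (m + j - 1)"
  show "0 < ?k" using \<open>j < k\<close> by simp
  fix m assume "m < ?k"
  have arc: "(c i, c (Suc i mod k)) \<in> A" if "i < k" for i
    using walk that unfolding closed_walk_def by blast
  consider "m = 0" | "0 < m" "Suc m < ?k" | "Suc m = ?k" using \<open>m < ?k\<close> by linarith
  then show "(?c m, ?c (Suc m mod ?k)) \<in> A"
  proof cases
    case 1
    then show ?thesis using chord \<open>j < k\<close> by simp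
  next
    case 2
    then have "Suc (m + j - 1) mod k = m + j" using \<open>1 < j\<close> by simp
    then show ?thesis using 2 arc[of "m + j - 1"] by simp
  next
    case 3
    then have "m + j - 1 = k - 1" "Suc (k - 1) mod k = 0" using \<open>1 < j\<close> \<open>j < k\<close> by auto
    then show ?thesis using 3 arc[of "k - 1"] \<open>1 < j\<close> \<open>j < k\<close> by simp
  qed
qed

lemma shortest_closed_walk_chordless:
  assumes walk: "closed_walk A k c" and shortest: "\<And>k' c'. k' < k \<Longrightarrow> \<not> closed_walk A k' c'"
    and irrefl: "\<And>x. (x, x) \<notin> A"
    and "i < k" "j < k" and chord: "(c i, c j) \<in> A"
  shows "j = Suc i mod k"
proof -
  define d where "d = (if i \<le> j then j - i else k + j - i)"
  have "d < k" "(i + d) mod k = j" using \<open>i < k\<close> \<open>j < k\<close> unfolding d_def by auto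
  let ?c = "\<lambda>m. c ((i + m) mod k)"
  have rotated: "closed_walk A k ?c" by (rule closed_walk_rotate[OF walk])
  have chord': "(?c 0, ?c d) \<in> A" using chord \<open>i < k\<close> \<open>(i + d) mod k = j\<close> by simp
  have "d \<noteq> 0" using chord irrefl \<open>(i + d) mod k = j\<close> \<open>i < k\<close> by (cases "d = 0") auto
  moreover have "\<not> 1 < d"
  proof
    assume "1 < d"
    have "k + 1 - d < k" using \<open>1 < d\<close> \<open>d < k\<close> by linarith
    then show False
      using closed_walk_shortcut[OF rotated \<open>1 < d\<close> \<open>d < k\<close> chord'] shortest by blast
  qed
  ultimately have "d = 1" by linarith
  show ?thesis
  proof (cases "i \<le> j")
    case True
    then show ?thesis using \<open>d = 1\<close> \<open>j < k\<close> unfolding d_def by simp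
  next
    case False
    then have "k + j - i = 1" using \<open>d = 1\<close> unfolding d_def by simp
    then have "j = 0" "Suc i = k" using \<open>i < k\<close> by linarith+
    then show ?thesis by simp
  qed
qed

lemma Suc_mod_inj: "i < k \<Longrightarrow> j < k \<Longrightarrow> Suc i mod k = Suc j mod k \<Longrightarrow> i = j"
  by (auto simp: mod_Suc split: if_splits)

lemma shortest_closed_walk_inj_on:
  assumes walk: "closed_walk A k c" and shortest: "\<And>k' c'. k' < k \<Longrightarrow> \<not> closed_walk A k' c'"
    and irrefl: "\<And>x. (x, x) \<notin> A"
  shows "inj_on c {..<k}"
proof (rule inj_onI)
  fix i j assume "i \<in> {..<k}" "j \<in> {..<k}" "c i = c j"
  moreover have "(c j, c (Suc j mod k)) \<in> A" using walk \<open>j \<in> {..<k}\<close> unfolding closed_walk_def by simp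
  ultimately have "Suc j mod k = Suc i mod k"
    using shortest_closed_walk_chordless[OF walk shortest irrefl, of i "Suc j mod k"] by simp
  then show "i = j" using Suc_mod_inj \<open>i \<in> {..<k}\<close> \<open>j \<in> {..<k}\<close> by simp
qed

definition dominating_cycle :: "('a \<times> 'a) set \<Rightarrow> 'a set \<Rightarrow> ('a \<Rightarrow> 'a) \<Rightarrow> bool" where
  "dominating_cycle A S s \<longleftrightarrow> cyclic_on s S \<and> (\<forall>x\<in>S. (x, s x) \<in> A) \<and>
     (\<forall>x\<in>S. \<forall>v\<in>S. (x, v) \<in> A \<longrightarrow> v \<noteq> s x \<longrightarrow> (s x, v) \<in> A)"

lemma shortest_closed_walk_dominating_cycle:
  assumes walk: "closed_walk A k c" and shortest: "\<And>k' c'. k' < k \<Longrightarrow> \<not> closed_walk A k' c'"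
    and irrefl: "\<And>x. (x, x) \<notin> A"
  obtains s where "dominating_cycle A (c ` {..<k}) s"
proof -
  have "0 < k" and arc: "\<And>i. i < k \<Longrightarrow> (c i, c (Suc i mod k)) \<in> A"
    using walk unfolding closed_walk_def by auto
  have chordless: "\<And>i j. i < k \<Longrightarrow> j < k \<Longrightarrow> (c i, c j) \<in> A \<Longrightarrow> j = Suc i mod k"
    using shortest_closed_walk_chordless[OF walk shortest irrefl] by blast
  have "inj_on c {..<k}" by (rule shortest_closed_walk_inj_on[OF walk shortest irrefl])
  define s where "s x = c (Suc (the_inv_into {..<k} c x) mod k)" for x
  have s: "s (c i) = c (Suc i mod k)" if "i < k" for i
    unfolding s_def using the_inv_into_f_f[OF \<open>inj_on c {..<k}\<close>] that by simp
  have iter: "(s ^^ n) (c 0) = c (n mod k)" for n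
  proof (induction n)
    case (Suc n)
    then show ?case using s[of "n mod k"] \<open>0 < k\<close> by (simp add: mod_Suc_eq)
  qed simp
  have "c ` {..<k} = orbit s (c 0)"
  proof (rule set_eqI)
    fix x
    have "x \<in> c ` {..<k} \<longleftrightarrow> (\<exists>n. 0 < n \<and> x = c (n mod k))"
    proof
      assume "x \<in> c ` {..<k}"
      then obtain i where "i < k" "x = c i" by blast
      then show "\<exists>n. 0 < n \<and> x = c (n mod k)" by (intro exI[of _ "i + k"]) simp
    qed (use \<open>0 < k\<close> in auto)
    then show "x \<in> c ` {..<k} \<longleftrightarrow> x \<in> orbit s (c 0)"
      unfolding orbit_altdef iter by blast
  qed
  then have "cyclic_on s (c ` {..<k})"
    using \<open>0 < k\<close> by (intro cyclic_on_singleI) auto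
  moreover have "\<forall>x\<in>c ` {..<k}. (x, s x) \<in> A" using arc s by auto
  moreover have "\<forall>x\<in>c ` {..<k}. \<forall>v\<in>c ` {..<k}. (x, v) \<in> A \<longrightarrow> v \<noteq> s x \<longrightarrow> (s x, v) \<in> A"
    using chordless s by auto
  ultimately show thesis using that unfolding dominating_cycle_def by blast
qed

lemma dominating_cycle_funpow_arc:
  assumes cyc: "dominating_cycle A S s" and "a \<in> S" "b \<in> S" "(a, b) \<in> A"
    and "\<And>m. 0 < m \<Longrightarrow> m \<le> k \<Longrightarrow> (s ^^ m) a \<noteq> b"
  shows "((s ^^ k) a, b) \<in> A"
  using assms(5)
proof (induction k)
  case 0
  then show ?case using \<open>(a, b) \<in> A\<close> by simp
next
  case (Suc k)
  then have "((s ^^ k) a, b) \<in> A" by simp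
  moreover have "(s ^^ k) a \<in> S" using cyc \<open>a \<in> S\<close> unfolding dominating_cycle_def
    by (simp add: cyclic_on_funpow_in)
  moreover have "s ((s ^^ k) a) \<noteq> b" using Suc.prems[of "Suc k"] by simp
  ultimately have "(s ((s ^^ k) a), b) \<in> A"
    using cyc \<open>b \<in> S\<close> unfolding dominating_cycle_def by simp
  then show ?case by simp
qed

lemma dominating_cycle_interval_dominating:
  assumes cyc: "dominating_cycle A V s" and "A \<subseteq> V \<times> V" and irrefl: "\<And>x. (x, x) \<notin> A"
  obtains vs where "linear_order_of V vs" "interval_dominating A vs"
proof -
  obtain vs where dist: "distinct vs" and set: "set vs = V"
    and iter: "\<And>x m. x \<in> V \<Longrightarrow> (s ^^ m) x = vs ! ((pos vs x + m) mod length vs)"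
    using cyclic_on_enumeration cyc unfolding dominating_cycle_def by blast
  have "interval_dominating A vs"
    unfolding interval_dominating_def
  proof (intro allI impI)
    fix x y z assume "(x, y) \<in> A" and z: "z \<in> open_cyc_interval vs x y"
    then have xy: "x \<in> set vs" "y \<in> set vs" "x \<noteq> y" using \<open>A \<subseteq> V \<times> V\<close> set irrefl by auto
    then have d: "z \<in> set vs" "0 < cyc_dist vs x z" "cyc_dist vs x z < cyc_dist vs x y"
      using z open_cyc_interval_iff[OF dist] by auto
    have dist_iter: "cyc_dist vs x ((s ^^ m) x) = m" if "m < length vs" for m
      using iter[of x m] cyc_dist_nth_mod[OF dist xy(1) that] xy(1) set by simp
    have "((s ^^ cyc_dist vs x z) x, y) \<in> A"
    proof (rule dominating_cycle_funpow_arc[OF cyc _ _ \<open>(x, y) \<in> A\<close>])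
      show "x \<in> V" "y \<in> V" using xy set by auto
      fix m assume "0 < m" "m \<le> cyc_dist vs x z"
      then have "cyc_dist vs x ((s ^^ m) x) < cyc_dist vs x y"
        using dist_iter d cyc_dist_less_length[OF dist xy(1) d(1)] by simp
      then show "(s ^^ m) x \<noteq> y" by auto
    qed
    moreover have "(s ^^ cyc_dist vs x z) x = z"
      using iter[of x] nth_cyc_dist[OF dist xy(1) d(1)] xy(1) set by simp
    ultimately show "(z, y) \<in> A" by simp
  qed
  then show thesis using that dist set unfolding linear_order_of_def by blast
qed

lemma succ_arcs_subset_induced_arcs:
  assumes "dominating_cycle A S s" "X \<subseteq> S" "X \<subseteq> Y"
  shows "succ_arcs s X \<subseteq> induced_arcs A Y"
  using assms unfolding succ_arcs_def induced_arcs_def dominating_cycle_def by auto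

lemma dominating_cycle_path_to_pred:
  assumes cyc: "dominating_cycle A S s" and "a \<in> S" "b \<in> S" "(a, b) \<in> A" "p \<in> S" "s p = b"
  shows "(a, p) \<in> (succ_arcs s (S \<inter> in_nbhd A b))\<^sup>*"
proof -
  have cyclic: "cyclic_on s S" using cyc unfolding dominating_cycle_def by simp
  have closed: "s z \<in> S \<inter> in_nbhd A b" if "z \<in> S \<inter> in_nbhd A b" "z \<noteq> p" for z
  proof -
    have "s z \<noteq> b"
      using cyclic_on_inj_on[OF cyclic] that \<open>p \<in> S\<close> \<open>s p = b\<close> by (auto dest: inj_onD)
    then show ?thesis
      using cyc that \<open>b \<in> S\<close> cyclic_on_inI[OF cyclic]
      unfolding dominating_cycle_def in_nbhd_def by auto
  qed
  have "a \<in> S \<inter> in_nbhd A b" using assms(2,4) unfolding in_nbhd_def by simp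
  then show ?thesis using cyclic_on_path_within[OF cyclic _ _ \<open>p \<in> S\<close> closed] by blast
qed

section \<open>Growing a dominating cycle\<close>

locale out_tournament_in_acyclic =
  fixes A :: "('a \<times> 'a) set"
  assumes irrefl: "(x, x) \<notin> A"
    and out_tournament: "(x, a) \<in> A \<Longrightarrow> (x, b) \<in> A \<Longrightarrow> a \<noteq> b \<Longrightarrow> (a, b) \<in> A \<or> (b, a) \<in> A"
    and in_acyclic: "acyclic (induced_arcs A (in_nbhd A x))"
begin

lemma no_cycle_in_in_nbhd:
  assumes "(a, b) \<in> induced_arcs A (in_nbhd A w)" "(b, a) \<in> (induced_arcs A (in_nbhd A w))\<^sup>*"
  shows False
proof -
  have "(a, a) \<in> (induced_arcs A (in_nbhd A w))\<^sup>+" using rtrancl_into_trancl2[OF assms] .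
  then show False using in_acyclic[of w] unfolding acyclic_def by simp
qed

text \<open>For a vertex y off the cycle, an \<^emph>\<open>exit\<close> is a cycle vertex u with u \<rightarrow> y \<rightarrow> s u; y is
  inserted between u and s u.\<close>

context
  fixes S s y
  assumes cyc: "dominating_cycle A S s" and new: "y \<notin> S"
begin

lemma succ_of_in_nbhd: "z \<in> S \<inter> in_nbhd A y \<Longrightarrow> s z \<in> in_nbhd A y \<union> out_nbhd A y"
  using cyc new out_tournament[of z y "s z"] cyclic_on_inI[of s S z]
  unfolding dominating_cycle_def in_nbhd_def out_nbhd_def by auto

lemma exit_exists:
  assumes "u0 \<in> S \<inter> in_nbhd A y"
  shows "\<exists>u \<in> S \<inter> in_nbhd A y. s u \<in> out_nbhd A y"
proof (rule ccontr)
  assume "\<not> ?thesis"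
  then have closed: "s z \<in> S \<inter> in_nbhd A y" if "z \<in> S \<inter> in_nbhd A y" for z
    using succ_of_in_nbhd[OF that] cyclic_on_inI[of s S z] cyc that
    unfolding dominating_cycle_def by blast
  have cyclic: "cyclic_on s S" using cyc unfolding dominating_cycle_def by simp
  have "(s u0, u0) \<in> (succ_arcs s (S \<inter> in_nbhd A y))\<^sup>*"
    using cyclic_on_path_within[OF cyclic _ closed[OF assms]] closed assms by blast
  then have "(s u0, u0) \<in> (induced_arcs A (in_nbhd A y))\<^sup>*"
    using rtrancl_mono[OF succ_arcs_subset_induced_arcs[OF cyc]] by blast
  moreover have "(u0, s u0) \<in> induced_arcs A (in_nbhd A y)"
    using closed[OF assms] assms cyc unfolding dominating_cycle_def induced_arcs_def by auto
  ultimately show False by (rule no_cycle_in_in_nbhd[rotated])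
qed

lemma no_out_arc_into_exit:
  assumes u: "u \<in> S \<inter> in_nbhd A y" "s u \<in> out_nbhd A y"
    and v: "v \<in> S \<inter> out_nbhd A y" "(v, s u) \<in> A"
  shows False
proof -
  let ?R = "induced_arcs A (in_nbhd A (s u))"
  have cyclic: "cyclic_on s S" and "s u \<in> S" and "(u, s u) \<in> A"
    using cyc u cyclic_on_inI[of s S u] unfolding dominating_cycle_def by auto
  have "(v, u) \<in> (succ_arcs s (S \<inter> in_nbhd A (s u)))\<^sup>*"
    using dominating_cycle_path_to_pred[OF cyc _ \<open>s u \<in> S\<close> v(2)] u v by blast
  then have "(v, u) \<in> ?R\<^sup>*"
    using rtrancl_mono[OF succ_arcs_subset_induced_arcs[OF cyc]] by blast
  moreover have "(u, y) \<in> ?R" "(y, v) \<in> ?R"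
    using u v \<open>(u, s u) \<in> A\<close> unfolding induced_arcs_def in_nbhd_def out_nbhd_def by auto
  ultimately show False using no_cycle_in_in_nbhd rtrancl_into_rtrancl by metis
qed

lemma exit_unique:
  assumes "u \<in> S \<inter> in_nbhd A y" "s u \<in> out_nbhd A y"
    and "u' \<in> S \<inter> in_nbhd A y" "s u' \<in> out_nbhd A y"
  shows "u = u'"
proof (rule ccontr)
  assume "u \<noteq> u'"
  then have "s u \<noteq> s u'"
    using cyc assms cyclic_on_inj_on unfolding dominating_cycle_def by (auto dest: inj_onD)
  then have "(s u, s u') \<in> A \<or> (s u', s u) \<in> A"
    using assms out_tournament unfolding out_nbhd_def by auto
  moreover have "s u \<in> S" "s u' \<in> S"
    using cyc assms cyclic_on_inI unfolding dominating_cycle_def by auto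
  ultimately show False using no_out_arc_into_exit assms by blast
qed

lemma exit_closed:
  assumes "u \<in> S \<inter> in_nbhd A y" "s u \<in> out_nbhd A y" "z \<in> S \<inter> in_nbhd A y" "z \<noteq> u"
  shows "s z \<in> S \<inter> in_nbhd A y"
proof -
  have "s z \<in> S" using cyc assms(3) cyclic_on_inI unfolding dominating_cycle_def by auto
  moreover have "s z \<notin> out_nbhd A y" using exit_unique assms \<open>s z \<in> S\<close> by blast
  ultimately show ?thesis using succ_of_in_nbhd[OF assms(3)] by blast
qed

lemma no_arc_from_exit_into_in_nbhd:
  assumes u: "u \<in> S \<inter> in_nbhd A y" "s u \<in> out_nbhd A y"
    and v: "v \<in> S \<inter> in_nbhd A y" "(u, v) \<in> A"
  shows False
proof -
  have cyclic: "cyclic_on s S" using cyc unfolding dominating_cycle_def by simp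
  have "(v, u) \<in> (succ_arcs s (S \<inter> in_nbhd A y))\<^sup>*"
    using cyclic_on_path_within[OF cyclic _ v(1)] exit_closed[OF u] u(1) by blast
  then have "(v, u) \<in> (induced_arcs A (in_nbhd A y))\<^sup>*"
    using rtrancl_mono[OF succ_arcs_subset_induced_arcs[OF cyc]] by blast
  moreover have "(u, v) \<in> induced_arcs A (in_nbhd A y)"
    using u v unfolding induced_arcs_def by auto
  ultimately show False by (rule no_cycle_in_in_nbhd[rotated])
qed

lemma exit_succ_dominates:
  assumes u: "u \<in> S \<inter> in_nbhd A y" "s u \<in> out_nbhd A y"
    and v: "v \<in> S" "(y, v) \<in> A" "v \<noteq> s u"
  shows "(s u, v) \<in> A"
proof -
  have "(s u, v) \<in> A \<or> (v, s u) \<in> A"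
    using out_tournament[of y "s u" v] u(2) v unfolding out_nbhd_def by blast
  then show ?thesis using no_out_arc_into_exit[OF u, of v] v unfolding out_nbhd_def by blast
qed

lemma new_vertex_dominates:
  assumes u: "u \<in> S \<inter> in_nbhd A y" "s u \<in> out_nbhd A y"
    and v: "v \<in> S" "(u, v) \<in> A"
  shows "(y, v) \<in> A"
proof -
  have "v \<noteq> y" using v(1) new by auto
  then have "(y, v) \<in> A \<or> (v, y) \<in> A"
    using out_tournament[of u y v] u(1) v(2) unfolding in_nbhd_def by blast
  then show ?thesis using no_arc_from_exit_into_in_nbhd[OF u, of v] v unfolding in_nbhd_def by blast
qed

lemma dominating_cycle_insert:
  assumes u: "u \<in> S \<inter> in_nbhd A y" "s u \<in> out_nbhd A y"
  shows "dominating_cycle A (insert y S) (s(u := y, y := s u))"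
proof -
  define t where "t = s(u := y, y := s u)"
  have "u \<noteq> y" using u new by auto
  then have t: "t u = y" "t y = s u" "\<And>z. z \<noteq> u \<Longrightarrow> z \<noteq> y \<Longrightarrow> t z = s z"
    unfolding t_def by auto
  have cyclic: "cyclic_on s S" and arc: "\<And>x. x \<in> S \<Longrightarrow> (x, s x) \<in> A"
    and dom: "\<And>x v. x \<in> S \<Longrightarrow> v \<in> S \<Longrightarrow> (x, v) \<in> A \<Longrightarrow> v \<noteq> s x \<Longrightarrow> (s x, v) \<in> A"
    using cyc unfolding dominating_cycle_def by auto
  have uy: "(u, y) \<in> A" and yu: "(y, s u) \<in> A"
    using u unfolding in_nbhd_def out_nbhd_def by auto
  have "cyclic_on t (insert y S)"
    unfolding t_def using cyclic_on_insert_after[OF cyclic _ new] u by blast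
  moreover have "(x, t x) \<in> A" if "x \<in> insert y S" for x
    using that t arc uy yu by (cases "x = u"; cases "x = y") auto
  moreover have "(t x, v) \<in> A"
    if x: "x \<in> insert y S" and v: "v \<in> insert y S" and xv: "(x, v) \<in> A" and "v \<noteq> t x" for x v
  proof -
    consider "x = y" | "x = u" | "x \<noteq> u" "x \<noteq> y" "v = y" | "x \<noteq> u" "x \<noteq> y" "v \<noteq> y"
      by blast
    then show ?thesis
    proof cases
      case 1
      then show ?thesis using exit_succ_dominates[OF u] v xv \<open>v \<noteq> t x\<close> t(2) irrefl by auto
    next
      case 2
      then show ?thesis using new_vertex_dominates[OF u] v xv \<open>v \<noteq> t x\<close> t(1) by auto
    next
      case 3
      then have "x \<in> S \<inter> in_nbhd A y" using x xv unfolding in_nbhd_def by simp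
      then show ?thesis using exit_closed[OF u] 3 t(3) unfolding in_nbhd_def by simp
    next
      case 4
      then show ?thesis using dom[OF _ _ xv] x v \<open>v \<noteq> t x\<close> t(3) by auto
    qed
  qed
  ultimately show ?thesis unfolding t_def[symmetric] dominating_cycle_def by blast
qed

end

lemma dominating_cycle_extend:
  assumes "finite V" "A \<subseteq> V \<times> V" "strongly_connected V A"
  shows "dominating_cycle A S s \<Longrightarrow> S \<subseteq> V \<Longrightarrow> \<exists>s. dominating_cycle A V s"
proof (induction "card (V - S)" arbitrary: S s rule: less_induct)
  case less
  show ?case
  proof (cases "S = V")
    case True
    then show ?thesis using less.prems by blast
  next
    case False
    then obtain b where b: "b \<in> V" "b \<notin> S" using less.prems(2) by blast
    obtain a where "a \<in> S"
      using less.prems(1) unfolding dominating_cycle_def cyclic_on_def by blast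
    then have "(a, b) \<in> A\<^sup>*" using assms(3) b less.prems(2) unfolding strongly_connected_def by blast
    then obtain u y where "u \<in> S" "y \<notin> S" "(u, y) \<in> A"
      using \<open>a \<in> S\<close> b(2) by (induction rule: rtrancl_induct) auto
    then obtain u' where "u' \<in> S \<inter> in_nbhd A y" "s u' \<in> out_nbhd A y"
      using exit_exists[OF less.prems(1)] unfolding in_nbhd_def by blast
    then have cyc': "dominating_cycle A (insert y S) (s(u' := y, y := s u'))"
      by (rule dominating_cycle_insert[OF less.prems(1) \<open>y \<notin> S\<close>])
    have "y \<in> V" using \<open>(u, y) \<in> A\<close> assms(2) by blast
    have "card ((V - S) - {y}) < card (V - S)"
      using \<open>y \<in> V\<close> \<open>y \<notin> S\<close> assms(1) by (intro card_Diff1_less) auto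
    moreover have "V - insert y S = (V - S) - {y}" by blast
    ultimately have "card (V - insert y S) < card (V - S)" by simp
    then show ?thesis
      by (rule less.hyps[OF _ cyc']) (use \<open>y \<in> V\<close> less.prems(2) in blast)
  qed
qed

lemma interval_dominating_order_exists:
  assumes "finite V" "A \<subseteq> V \<times> V" "strongly_connected V A"
  shows "\<exists>vs. linear_order_of V vs \<and> interval_dominating A vs"
proof (cases "A = {}")
  case True
  obtain vs where "distinct vs" "set vs = V" using finite_distinct_list[OF assms(1)] by blast
  then show ?thesis using True unfolding linear_order_of_def interval_dominating_def by blast
next
  case False
  then obtain a b where "(a, b) \<in> A" by auto
  moreover have "(b, a) \<in> A\<^sup>*" using calculation assms(2,3) unfolding strongly_connected_def by blast
  ultimately have "(a, a) \<in> A\<^sup>+" by (rule rtrancl_into_trancl2)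
  then have "\<exists>k c. closed_walk A k c" by (metis closed_walk_if_trancl)
  then obtain k c where walk: "closed_walk A k c" and shortest: "\<And>k' c'. k' < k \<Longrightarrow> \<not> closed_walk A k' c'"
    using exists_least_iff[of "\<lambda>k. \<exists>c. closed_walk A k c"] by blast
  obtain s where cyc: "dominating_cycle A (c ` {..<k}) s"
    using shortest_closed_walk_dominating_cycle[OF walk shortest irrefl] by blast
  moreover have "c ` {..<k} \<subseteq> V" using walk assms(2) unfolding closed_walk_def by blast
  ultimately obtain s' where "dominating_cycle A V s'"
    using dominating_cycle_extend[OF assms] by blast
  then show ?thesis using dominating_cycle_interval_dominating[OF _ assms(2) irrefl] by metis
qed

end

lemma out_tournament_in_acyclicI:
  assumes "digraph V A"
    and local: "\<forall>x\<in>V. induces_tournament A (out_nbhd A x) \<and> induces_acyclic A (in_nbhd A x)"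
  shows "out_tournament_in_acyclic A"
proof
  have AV: "A \<subseteq> V \<times> V" using assms(1) unfolding digraph_def by simp
  show "(x, x) \<notin> A" for x using assms(1) unfolding digraph_def by simp
  show "(a, b) \<in> A \<or> (b, a) \<in> A" if "(x, a) \<in> A" "(x, b) \<in> A" "a \<noteq> b" for x a b
  proof -
    have "induces_tournament A (out_nbhd A x)" using local that(1) AV by blast
    then show ?thesis
      using that unfolding induces_tournament_def induced_arcs_def out_nbhd_def by blast
  qed
  show "acyclic (induced_arcs A (in_nbhd A x))" for x
  proof (cases "x \<in> V")
    case True
    then show ?thesis using local unfolding induces_acyclic_def by blast
  next
    case False
    then have "induced_arcs A (in_nbhd A x) = {}"
      using AV unfolding induced_arcs_def in_nbhd_def by blast
    then show ?thesis by (simp add: acyclic_def)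
  qed
qed

theorem theorem2p1:
  fixes V :: "'a set" and A :: "('a \<times> 'a) set"
  assumes "oriented_graph V A" and "strongly_connected V A"
  shows "(\<forall>x\<in>V. induces_tournament A (out_nbhd A x) \<and> induces_acyclic A (in_nbhd A x))
     \<longleftrightarrow> (\<exists>vs. linear_order_of V vs \<and>
           (\<forall>x y z. (x, y) \<in> A \<longrightarrow> z \<in> open_cyc_interval vs x y \<longrightarrow> (z, y) \<in> A))"
  unfolding interval_dominating_def[symmetric]
proof
  have digraph: "digraph V A" using assms(1) unfolding oriented_graph_def by simp
  then have "finite V" "A \<subseteq> V \<times> V" unfolding digraph_def by simp_all
  assume "\<forall>x\<in>V. induces_tournament A (out_nbhd A x) \<and> induces_acyclic A (in_nbhd A x)"
  then interpret out_tournament_in_acyclic A by (rule out_tournament_in_acyclicI[OF digraph])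
  show "\<exists>vs. linear_order_of V vs \<and> interval_dominating A vs"
    by (rule interval_dominating_order_exists) fact+
next
  assume "\<exists>vs. linear_order_of V vs \<and> interval_dominating A vs"
  then obtain vs where vs: "linear_order_of V vs" and dom: "interval_dominating A vs" by blast
  show "\<forall>x\<in>V. induces_tournament A (out_nbhd A x) \<and> induces_acyclic A (in_nbhd A x)"
    using interval_dominating_out_nbhd_tournament[OF assms(1) vs dom]
      interval_dominating_in_nbhd_acyclic[OF assms(1) vs dom] by simp
qed

end
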